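(* Let $P_0(k)=C_{p0}T_{p0}^k-C_mT_m^k$ be a low pair function (so $C_{p0},C_m>0$ and $0<T_{p0}<T_m<1$), and let $C_{pi}>0$ and $0<T_{pi}<T_m$, $i=1,\dots,N$. Then there exist $j\in\{0,1,2\}$ and positive numbers $C_{m0},\dots,C_{mN}$ with $\sum_{i=0}^N C_{mi}=C_m$ such that the low pair functions $L_i(k)=C_{pi}T_{pi}^k-C_{mi}T_m^k$, $i=0,\dots,N$, all have their $j$-th derivatives vanishing at a common point (i.e. are synchronized at a common characteristic point), and $$P_0(k)+\sum_{i=1}^N C_{pi}T_{pi}^k=\sum_{i=0}^N L_i(k).$$
   Context: A low pair function is $C_pT_p^k-C_mT_m^k$ with $C_p,C_m>0$ and $0<T_p<T_m<1$, real variable $k$. Its characteristic points are the zeros of the function (abscissa intersection), of its first derivative (minimum) and of its second derivative (inflection point). *)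

theory Defs
  imports "HOL-Analysis.Analysis"
begin

definition low_pair :: "real \<Rightarrow> real \<Rightarrow> real \<Rightarrow> real \<Rightarrow> real \<Rightarrow> real" where
  "low_pair Cp Tp Cm Tm k = Cp * Tp powr k - Cm * Tm powr k"

definition is_low_pair :: "real \<Rightarrow> real \<Rightarrow> real \<Rightarrow> real \<Rightarrow> bool" where
  "is_low_pair Cp Tp Cm Tm \<longleftrightarrow> Cp > 0 \<and> Cm > 0 \<and> 0 < Tp \<and> Tp < Tm \<and> Tm < 1"

end

theory Submission
  imports Defs "HOL-Real_Asymp.Real_Asymp"
begin

text \<open>The synchronization can always be achieved at a common zero (j = 0). Dividing by
  Tm^k, the function g(k) = \<Sum>i Cp_i (Tp_i/Tm)^k is continuous, decreases to 0 as k \<rightarrow> \<infinity> and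
  is unbounded as k \<rightarrow> -\<infinity>, so g(k0) = Cm for some k0. Splitting Cm into the summands
  Cmi = Cp_i (Tp_i/Tm)^k0 of g(k0) makes every low pair vanish at k0.\<close>

lemma powr_sum_attains_value:
  fixes c r :: "'a \<Rightarrow> real"
  assumes "finite A" "a \<in> A" "\<forall>i\<in>A. c i > 0 \<and> 0 < r i \<and> r i < 1" "C > 0"
  shows "\<exists>k. (\<Sum>i\<in>A. c i * r i powr k) = C"
proof -
  define g where "g k = (\<Sum>i\<in>A. c i * r i powr k)" for k :: real
  have "(g \<longlongrightarrow> 0) at_top"
    unfolding g_def
  proof (intro tendsto_null_sum)
    fix i assume "i \<in> A"
    then have "0 < r i" "r i < 1" using assms(3) by auto
    then show "((\<lambda>k. c i * r i powr k) \<longlongrightarrow> 0) at_top" by real_asymp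
  qed
  then obtain b where b: "g b < C"
    using \<open>C > 0\<close> order_tendstoD(2) eventually_at_top_linorder by fastforce
  have g_ge_term: "c a * r a powr k \<le> g k" for k
    unfolding g_def using assms by (intro member_le_sum) auto
  have "filterlim (\<lambda>k. c a * r a powr k) at_top at_bot"
  proof -
    have "c a > 0" "0 < r a" "r a < 1" using assms(2,3) by auto
    then show ?thesis by real_asymp
  qed
  then have "filterlim g at_top at_bot"
    using g_ge_term by (auto intro: filterlim_at_top_mono)
  then obtain a' where a': "a' \<le> b" "C \<le> g a'"
    unfolding filterlim_at_top eventually_at_bot_linorder
    by (metis min.cobounded1 min.cobounded2)
  have "isCont g x" for x
    unfolding g_def using assms(3) by (intro continuous_intros) auto
  then obtain k where "g k = C"
    using IVT2[of g b C a'] a' b by auto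
  then show ?thesis
    unfolding g_def by blast
qed

lemma low_pair_vanishes:
  assumes "0 < Tp" "0 < Tm"
  shows "low_pair Cp Tp (Cp * (Tp / Tm) powr k) Tm k = 0"
  using assms by (simp add: low_pair_def powr_divide)

lemma sum_low_pair:
  "(\<Sum>i\<in>A. low_pair (Cp i) (Tp i) (Cm i) Tm k)
     = (\<Sum>i\<in>A. Cp i * Tp i powr k) - (\<Sum>i\<in>A. Cm i) * Tm powr k"
  unfolding low_pair_def by (simp add: sum_subtractf sum_distrib_right)

theorem lemma5:
  fixes Cp Tp :: "nat \<Rightarrow> real" and Cm Tm :: real and N :: nat
  assumes P0: "is_low_pair (Cp 0) (Tp 0) Cm Tm"
    and others: "\<forall>i\<in>{1..N}. Cp i > 0 \<and> 0 < Tp i \<and> Tp i < Tm"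
  shows "\<exists>j\<in>{0::nat, 1, 2}. \<exists>Cmi :: nat \<Rightarrow> real.
           (\<forall>i\<le>N. Cmi i > 0) \<and> (\<Sum>i\<le>N. Cmi i) = Cm \<and>
           (\<forall>i\<le>N. is_low_pair (Cp i) (Tp i) (Cmi i) Tm) \<and>
           (\<exists>k0::real. \<forall>i\<le>N. (deriv ^^ j) (low_pair (Cp i) (Tp i) (Cmi i) Tm) k0 = 0) \<and>
           (\<forall>k::real. low_pair (Cp 0) (Tp 0) Cm Tm k + (\<Sum>i=1..N. Cp i * Tp i powr k)
                      = (\<Sum>i\<le>N. low_pair (Cp i) (Tp i) (Cmi i) Tm k))"
proof -
  have Tm: "0 < Tm" "Tm < 1" and "Cm > 0"
    using P0 unfolding is_low_pair_def by auto
  have pairs: "\<forall>i\<le>N. Cp i > 0 \<and> 0 < Tp i \<and> Tp i < Tm"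
  proof (intro allI impI)
    fix i assume "i \<le> N"
    then show "Cp i > 0 \<and> 0 < Tp i \<and> Tp i < Tm"
      using P0 others unfolding is_low_pair_def by (cases "i = 0") auto
  qed
  then obtain k0 where k0: "(\<Sum>i\<le>N. Cp i * (Tp i / Tm) powr k0) = Cm"
    using powr_sum_attains_value[of "{..N}" 0 Cp "\<lambda>i. Tp i / Tm" Cm] \<open>Cm > 0\<close> Tm by auto
  define Cmi where "Cmi i = Cp i * (Tp i / Tm) powr k0" for i
  have Cmi_pos: "\<forall>i\<le>N. Cmi i > 0"
    using pairs Tm unfolding Cmi_def by auto
  moreover have sum_Cmi: "(\<Sum>i\<le>N. Cmi i) = Cm"
    using k0 unfolding Cmi_def by simp
  moreover have "\<forall>i\<le>N. is_low_pair (Cp i) (Tp i) (Cmi i) Tm"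
    using pairs Cmi_pos Tm unfolding is_low_pair_def by auto
  moreover have "\<forall>i\<le>N. low_pair (Cp i) (Tp i) (Cmi i) Tm k0 = 0"
    using pairs Tm unfolding Cmi_def by (simp add: low_pair_vanishes)
  moreover have "\<forall>k. low_pair (Cp 0) (Tp 0) Cm Tm k + (\<Sum>i=1..N. Cp i * Tp i powr k)
                     = (\<Sum>i\<le>N. low_pair (Cp i) (Tp i) (Cmi i) Tm k)"
  proof
    fix k :: real
    have "(\<Sum>i\<le>N. Cp i * Tp i powr k) = Cp 0 * Tp 0 powr k + (\<Sum>i=1..N. Cp i * Tp i powr k)"
      by (simp add: atMost_atLeast0 sum.atLeast_Suc_atMost)
    then show "low_pair (Cp 0) (Tp 0) Cm Tm k + (\<Sum>i=1..N. Cp i * Tp i powr k)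
                 = (\<Sum>i\<le>N. low_pair (Cp i) (Tp i) (Cmi i) Tm k)"
      unfolding sum_low_pair sum_Cmi by (simp add: low_pair_def)
  qed
  ultimately show ?thesis
    by (intro bexI[of _ 0]) auto
qed

end
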